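(* Fix $i,j\in I$ with $\tau(i)=i\neq j$. For any $m,n\in\mathbb{N}$ there exists a uniquely determined polynomial $w_{m,n}(x,y)=\sum_{r,s}b_{rs}x^ry^s\in\mathbb{K}[x,y]$ such that, in $\mathcal{A}$, $$F_i^mF_jF_i^n=\sum_{r,s}b_{rs}\,F_i^{\circledast r}\circledast F_j\circledast F_i^{\circledast s},$$ where the left side is the product in the free algebra $T(V^-)$ and $F_i^{\circledast r}$ is the $r$-th power with respect to $\circledast$.
   Context: Let $I$ be a finite set and $(a_{kl})_{k,l\in I}$ a symmetrizable generalized Cartan matrix, with relatively prime positive integers $d_k$ such that $(d_ka_{kl})$ is symmetric. Let $Q=\bigoplus_{k\in I}\mathbb{Z}\alpha_k$ with symmetric bilinear form $(\alpha_k,\alpha_l)=d_ka_{kl}$ and $Q^+=\bigoplus_k\mathbb{N}\alpha_k$. Let $\mathbb{K}$ be a field of characteristic zero, $q\in\mathbb{K}^\times$ with $q^{2d_k}\neq1$ for all $k$, and $q_k=q^{d_k}$. Let $\tau:I\to I$ be a bijection with $\tau^2=\mathrm{id}$ and $a_{\tau(k)\tau(l)}=a_{kl}$, and let $(c_k)_{k\in I}\in(\mathbb{K}^\times)^I$ with $c_k=c_{\tau(k)}$ whenever $a_{k\tau(k)}=0$. Let $T(V^-)=\mathbb{K}\langle F_k:k\in I\rangle$ be the free algebra, graded by $-Q^+$ with $F_k$ of degree $-\alpha_k$. Let $\partial_k^L,\partial_k^R:T(V^-)\to T(V^-)$ be the linear maps with $\partial_k^L(F_l)=\partial_k^R(F_l)=\delta_{kl}$,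 $\partial_k^L(1)=\partial_k^R(1)=0$, and, for $f$ of degree $-\mu$ and $g$ of degree $-\nu$, $\partial_k^R(fg)=q^{(\alpha_k,\nu)}\partial_k^R(f)g+f\partial_k^R(g)$, $\partial_k^L(fg)=\partial_k^L(f)g+q^{(\alpha_k,\mu)}f\partial_k^L(g)$. Let $G_\theta\subseteq Q$ be the subgroup generated by $\alpha_k-\alpha_{\tau(k)}$, $k\in I$, and let $\mathcal{A}=H_\theta\ltimes T(V^-)$ be the $\mathbb{K}$-algebra generated by $T(V^-)$ and elements $K_\mu$ ($\mu\in G_\theta$) subject to $K_0=1$, $K_\mu K_\nu=K_{\mu+\nu}$, $K_\mu F_k=q^{-(\mu,\alpha_k)}F_kK_\mu$; write $K_{\tau(k)}K_k^{-1}=K_{\alpha_{\tau(k)}-\alpha_k}$ and let $H_\theta=\mathrm{span}\{K_\mu\}$. By earlier work there is a unique associative product $\circledast$ on $\mathcal{A}$ with $h\circledast g=hg$, $g\circledast h=gh$ for $h\in H_\theta$, $g\in T(V^-)$, and $F_k\circledast g=F_kg-\frac{c_kq^{(\alpha_k,\alpha_{\tau(k)})}}{q_k-q_k^{-1}}K_{\tau(k)}K_k^{-1}\partial^L_{\tau(k)}(g)$ for all $k\in I$, $g\in T(V^-)$. *)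

theory Defs
  imports Main
begin

text \<open>Index set I: a finite type 'i. Root lattice Q = ('i => int) (coordinates w.r.t. simple roots).
 Elements of A = H_theta \<ltimes> T(V^-) are represented by their coefficient functions
 X :: ('i => int) => 'i list => 'k, where X mu w is the coefficient of K_mu F_w
 (F_w the word monomial F_{w_1}...F_{w_n}).\<close>

type_synonym ('i,'k) elA = "('i \<Rightarrow> int) \<Rightarrow> 'i list \<Rightarrow> 'k"

definition gen_cartan :: "('i \<Rightarrow> 'i \<Rightarrow> int) \<Rightarrow> bool" where
  "gen_cartan a \<longleftrightarrow> (\<forall>k. a k k = 2) \<and> (\<forall>k l. k \<noteq> l \<longrightarrow> a k l \<le> 0)
     \<and> (\<forall>k l. a k l = 0 \<longleftrightarrow> a l k = 0)"

definition symmetrizer :: "('i \<Rightarrow> 'i \<Rightarrow> int) \<Rightarrow> ('i \<Rightarrow> nat) \<Rightarrow> bool" where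
  "symmetrizer a d \<longleftrightarrow> (\<forall>k. d k > 0) \<and> Gcd (range d) = 1
     \<and> (\<forall>k l. int (d k) * a k l = int (d l) * a l k)"

definition zeroQ :: "'i \<Rightarrow> int" where "zeroQ = (\<lambda>_. 0)"

definition sroot :: "'i \<Rightarrow> ('i \<Rightarrow> int)" where
  "sroot k = (\<lambda>l. if l = k then 1 else 0)"

definition bform :: "('i::finite \<Rightarrow> 'i \<Rightarrow> int) \<Rightarrow> ('i \<Rightarrow> nat) \<Rightarrow> ('i \<Rightarrow> int) \<Rightarrow> ('i \<Rightarrow> int) \<Rightarrow> int" where
  "bform a d \<mu> \<nu> = (\<Sum>k\<in>UNIV. \<Sum>l\<in>UNIV. \<mu> k * \<nu> l * int (d k) * a k l)"

text \<open>weight nu of a word: F_w has degree - wt w\<close>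
definition wt :: "'i list \<Rightarrow> ('i \<Rightarrow> int)" where
  "wt w = (\<lambda>l. int (count_list w l))"

definition Gtheta :: "('i::finite \<Rightarrow> 'i) \<Rightarrow> ('i \<Rightarrow> int) set" where
  "Gtheta \<tau> = {\<mu>. \<exists>n::'i \<Rightarrow> int. \<mu> = (\<lambda>l. \<Sum>k\<in>UNIV. n k * (sroot k l - sroot (\<tau> k) l))}"

definition Acar :: "('i::finite \<Rightarrow> 'i) \<Rightarrow> ('i,'k::zero) elA set" where
  "Acar \<tau> = {X. finite {(\<mu>,w). X \<mu> w \<noteq> 0} \<and> (\<forall>\<mu> w. X \<mu> w \<noteq> 0 \<longrightarrow> \<mu> \<in> Gtheta \<tau>)}"

definition Tcar :: "('i,'k::zero) elA set" where
  "Tcar = {X. finite {(\<mu>,w). X \<mu> w \<noteq> 0} \<and> (\<forall>\<mu> w. X \<mu> w \<noteq> 0 \<longrightarrow> \<mu> = zeroQ)}"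

definition Hcar :: "('i::finite \<Rightarrow> 'i) \<Rightarrow> ('i,'k::zero) elA set" where
  "Hcar \<tau> = {X \<in> Acar \<tau>. \<forall>\<mu> w. X \<mu> w \<noteq> 0 \<longrightarrow> w = []}"

definition oneA :: "('i,'k::{zero,one}) elA" where
  "oneA = (\<lambda>\<mu> w. if \<mu> = zeroQ \<and> w = [] then 1 else 0)"

definition monoA :: "'i list \<Rightarrow> ('i,'k::{zero,one}) elA" where
  "monoA u = (\<lambda>\<mu> w. if \<mu> = zeroQ \<and> w = u then 1 else 0)"

definition Fel :: "'i \<Rightarrow> ('i,'k::{zero,one}) elA" where
  "Fel k = monoA [k]"

definition addA :: "('i,'k::plus) elA \<Rightarrow> ('i,'k) elA \<Rightarrow> ('i,'k) elA" where
  "addA X Y = (\<lambda>\<mu> w. X \<mu> w + Y \<mu> w)"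

definition smultA :: "'k::times \<Rightarrow> ('i,'k) elA \<Rightarrow> ('i,'k) elA" where
  "smultA c X = (\<lambda>\<mu> w. c * X \<mu> w)"

text \<open>product h g in A for h in H_theta, g in T(V^-)\<close>
definition HTmult :: "('i,'k::times) elA \<Rightarrow> ('i,'k) elA \<Rightarrow> ('i,'k) elA" where
  "HTmult h g = (\<lambda>\<nu> w. h \<nu> [] * g zeroQ w)"

text \<open>product g h in A for g in T(V^-), h in H_theta, using F_k K_nu = q^((nu,alpha_k)) K_nu F_k\<close>
definition THmult :: "('i::finite \<Rightarrow> 'i \<Rightarrow> int) \<Rightarrow> ('i \<Rightarrow> nat) \<Rightarrow> 'k::field
     \<Rightarrow> ('i,'k) elA \<Rightarrow> ('i,'k) elA \<Rightarrow> ('i,'k) elA" where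
  "THmult a d q g h = (\<lambda>\<nu> w. q powi bform a d \<nu> (wt w) * g zeroQ w * h \<nu> [])"

definition Fmul :: "'i \<Rightarrow> ('i list \<Rightarrow> 'k::zero) \<Rightarrow> ('i list \<Rightarrow> 'k)" where
  "Fmul k g = (\<lambda>w. case w of [] \<Rightarrow> 0 | l # u \<Rightarrow> if l = k then g u else 0)"

text \<open>the twisted derivation partial^L_k on coefficient functions:
  partial^L_k (F_{l_1} ... F_{l_n}) = sum over p with l_p = k of
  q^((alpha_k, alpha_{l_1}+...+alpha_{l_{p-1}})) F_{l_1}..(omit l_p)..F_{l_n},
  which is the unique linear map with the stated twisted Leibniz rule.\<close>
definition dL :: "('i::finite \<Rightarrow> 'i \<Rightarrow> int) \<Rightarrow> ('i \<Rightarrow> nat) \<Rightarrow> 'k::field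
     \<Rightarrow> 'i \<Rightarrow> ('i list \<Rightarrow> 'k) \<Rightarrow> ('i list \<Rightarrow> 'k)" where
  "dL a d q k g = (\<lambda>w. \<Sum>p\<in>{0..length w}.
      q powi bform a d (sroot k) (wt (take p w)) * g (take p w @ k # drop p w))"

definition Fstar_rhs :: "('i::finite \<Rightarrow> 'i \<Rightarrow> int) \<Rightarrow> ('i \<Rightarrow> nat) \<Rightarrow> 'k::field
     \<Rightarrow> ('i \<Rightarrow> 'i) \<Rightarrow> ('i \<Rightarrow> 'k) \<Rightarrow> 'i \<Rightarrow> ('i,'k) elA \<Rightarrow> ('i,'k) elA" where
  "Fstar_rhs a d q \<tau> c k g = (\<lambda>\<nu> w.
      (if \<nu> = zeroQ then Fmul k (g zeroQ) w else 0)
    - (if \<nu> = (\<lambda>l. sroot (\<tau> k) l - sroot k l) then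
         c k * q powi bform a d (sroot k) (sroot (\<tau> k)) / (q ^ d k - inverse (q ^ d k))
         * dL a d q (\<tau> k) (g zeroQ) w
       else 0))"

primrec starpow :: "(('i,'k::{zero,one}) elA \<Rightarrow> ('i,'k) elA \<Rightarrow> ('i,'k) elA) \<Rightarrow> ('i,'k) elA \<Rightarrow> nat \<Rightarrow> ('i,'k) elA" where
  "starpow st X 0 = oneA"
| "starpow st X (Suc r) = st X (starpow st X r)"

definition is_star_product :: "('i::finite \<Rightarrow> 'i \<Rightarrow> int) \<Rightarrow> ('i \<Rightarrow> nat) \<Rightarrow> 'k::field
     \<Rightarrow> ('i \<Rightarrow> 'i) \<Rightarrow> ('i \<Rightarrow> 'k) \<Rightarrow> (('i,'k) elA \<Rightarrow> ('i,'k) elA \<Rightarrow> ('i,'k) elA) \<Rightarrow> bool" where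
  "is_star_product a d q \<tau> c st \<longleftrightarrow>
     (\<forall>X\<in>Acar \<tau>. \<forall>Y\<in>Acar \<tau>. st X Y \<in> Acar \<tau>)
   \<and> (\<forall>X\<in>Acar \<tau>. \<forall>Y\<in>Acar \<tau>. \<forall>Z\<in>Acar \<tau>. st (st X Y) Z = st X (st Y Z))
   \<and> (\<forall>X\<in>Acar \<tau>. \<forall>Y\<in>Acar \<tau>. \<forall>Z\<in>Acar \<tau>.
        st (addA X Y) Z = addA (st X Z) (st Y Z) \<and> st Z (addA X Y) = addA (st Z X) (st Z Y))
   \<and> (\<forall>e. \<forall>X\<in>Acar \<tau>. \<forall>Y\<in>Acar \<tau>.
        st (smultA e X) Y = smultA e (st X Y) \<and> st X (smultA e Y) = smultA e (st X Y))
   \<and> (\<forall>h\<in>Hcar \<tau>. \<forall>g\<in>Tcar. st h g = HTmult h g \<and> st g h = THmult a d q g h)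
   \<and> (\<forall>k. \<forall>g\<in>Tcar. st (Fel k) g = Fstar_rhs a d q \<tau> c k g)"

end

theory Submission
  imports Defs
begin

(* Since \<tau>(i) = i, the correction term of F_i \<circledast> g lies in T(V^-) again: F_i \<circledast> g equals
   F_i g minus a multiple of \<partial>^L_i(g), and \<partial>^L_i deletes one letter i from each word, so
   it only produces shorter words. Since \<tau>(j) \<noteq> i, F_j \<circledast> F_i^{\<circledast> s} = F_j F_i^{\<circledast> s}
   (no letter \<tau>(j) occurs). Consequently F_i^{\<circledast> r} \<circledast> F_j \<circledast> F_i^{\<circledast> s} is
   F_i^r F_j F_i^s plus a combination of monomials F_i^a F_j F_i^b with a + b < r + s. This
   family is unitriangular with respect to the total degree over the monomials F_i^a F_j F_i^b,
   which gives existence and uniqueness of the expansion by induction on the degree. *)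

locale unitriangular =
  fixes E :: "'p \<Rightarrow> ('i,'k::comm_ring_1) elA" and word :: "'p \<Rightarrow> 'i list"
    and deg :: "'p \<Rightarrow> nat"
  assumes inj_word: "inj word"
    and finite_level: "\<And>N. finite {p. deg p = N}"
    and support: "\<And>p \<mu> w. E p \<mu> w \<noteq> 0 \<Longrightarrow>
      \<mu> = zeroQ \<and> (\<exists>p'. w = word p' \<and> (deg p' < deg p \<or> p' = p))"
    and diagonal: "\<And>p. E p zeroQ (word p) = 1"
begin

definition expansion :: "('p \<Rightarrow> 'k) \<Rightarrow> ('i,'k) elA" where
  "expansion b = (\<lambda>\<mu> w. \<Sum>p\<in>{p. b p \<noteq> 0}. b p * E p \<mu> w)"

lemma expansion_eq_sum:
  assumes "finite B" and "{p. b p \<noteq> 0} \<subseteq> B"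
  shows "expansion b \<mu> w = (\<Sum>p\<in>B. b p * E p \<mu> w)"
  unfolding expansion_def by (rule sum.mono_neutral_left) (use assms in auto)

lemma expansion_lincomb:
  assumes "finite {p. b1 p \<noteq> 0}" and "finite {p. b2 p \<noteq> 0}"
  shows "expansion (\<lambda>p. x * b1 p + y * b2 p) \<mu> w = x * expansion b1 \<mu> w + y * expansion b2 \<mu> w"
proof -
  let ?B = "{p. b1 p \<noteq> 0} \<union> {p. b2 p \<noteq> 0}"
  have "finite ?B" using assms by simp
  then show ?thesis
    by (subst (1 2 3) expansion_eq_sum[where B = ?B])
      (auto simp: sum_distrib_left sum.distrib algebra_simps)
qed

lemma expansion_support:
  assumes "expansion b \<mu> w \<noteq> 0"
  obtains p where "b p \<noteq> 0" and "E p \<mu> w \<noteq> 0"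
proof -
  from assms obtain p where "p \<in> {p. b p \<noteq> 0}" and "b p * E p \<mu> w \<noteq> 0"
    unfolding expansion_def by (rule sum.not_neutral_contains_not_neutral)
  then have "b p \<noteq> 0" and "E p \<mu> w \<noteq> 0" by auto
  then show thesis by (rule that)
qed

lemma expansion_at_top_word:
  assumes "finite {p. b p \<noteq> 0}" and "\<And>p'. b p' \<noteq> 0 \<Longrightarrow> deg p' \<le> deg p"
  shows "expansion b zeroQ (word p) = b p"
proof -
  have vanish: "E p' zeroQ (word p) = 0" if "b p' \<noteq> 0" and "p' \<noteq> p" for p'
  proof (rule ccontr)
    assume "E p' zeroQ (word p) \<noteq> 0"
    then obtain p'' where "word p = word p''" and lower: "deg p'' < deg p' \<or> p'' = p'"
      using support by blast
    then have "p'' = p" using inj_word by (simp add: inj_eq)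
    with lower \<open>p' \<noteq> p\<close> assms(2)[OF \<open>b p' \<noteq> 0\<close>] show False by auto
  qed
  have "expansion b zeroQ (word p) = (\<Sum>p'\<in>insert p {p. b p \<noteq> 0}. b p' * E p' zeroQ (word p))"
    using assms(1) by (intro expansion_eq_sum) auto
  also have "\<dots> = (\<Sum>p'\<in>insert p {p. b p \<noteq> 0}. if p' = p then b p else 0)"
    using vanish diagonal by (intro sum.cong) auto
  also have "\<dots> = b p"
    using assms(1) by (simp add: sum.delta)
  finally show ?thesis .
qed

lemma exists_expansion_if_lower_degree:
  assumes "\<And>\<mu> w. X \<mu> w \<noteq> 0 \<Longrightarrow> \<mu> = zeroQ \<and> (\<exists>p. w = word p \<and> deg p < N)"
  shows "\<exists>b. finite {p. b p \<noteq> 0} \<and> X = expansion b"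
  using assms
proof (induction N arbitrary: X)
  case 0
  then have "X = expansion (\<lambda>_. 0)"
    by (auto simp: expansion_def fun_eq_iff)
  then show ?case by (intro exI[of _ "\<lambda>_. 0"]) simp
next
  case (Suc N)
  define top where "top p = (if deg p = N then X zeroQ (word p) else 0)" for p
  have finite_top: "finite {p. top p \<noteq> 0}"
    by (rule finite_subset[OF _ finite_level[of N]]) (auto simp: top_def)
  have top_support: "\<mu> = zeroQ \<and> (\<exists>p. w = word p \<and> deg p \<le> N)"
    if nonzero: "expansion top \<mu> w \<noteq> 0" for \<mu> w
  proof -
    obtain p where "top p \<noteq> 0" and "E p \<mu> w \<noteq> 0"
      using expansion_support[OF nonzero] .
    then show ?thesis
      using support[of p \<mu> w] by (auto simp: top_def split: if_splits)
  qed
  have "\<mu> = zeroQ \<and> (\<exists>p. w = word p \<and> deg p < N)"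
    if nonzero: "X \<mu> w - expansion top \<mu> w \<noteq> 0" for \<mu> w
  proof -
    from nonzero have "X \<mu> w \<noteq> 0 \<or> expansion top \<mu> w \<noteq> 0" by auto
    then obtain p where \<mu>: "\<mu> = zeroQ" and w: "w = word p" and "deg p \<le> N"
      using Suc.prems top_support by (metis less_Suc_eq_le)
    moreover have "deg p \<noteq> N"
    proof
      assume "deg p = N"
      then have "expansion top zeroQ (word p) = X zeroQ (word p)"
        by (subst expansion_at_top_word[OF finite_top]) (auto simp: top_def split: if_splits)
      with nonzero \<mu> w show False by simp
    qed
    ultimately show ?thesis by auto
  qed
  from Suc.IH[of "\<lambda>\<mu> w. X \<mu> w - expansion top \<mu> w", OF this] obtain b where finite_b: "finite {p. b p \<noteq> 0}"
    and residual: "(\<lambda>\<mu> w. X \<mu> w - expansion top \<mu> w) = expansion b"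
    by blast
  have "X = expansion (\<lambda>p. b p + top p)"
  proof (intro ext)
    fix \<mu> w
    have "X \<mu> w - expansion top \<mu> w = expansion b \<mu> w"
      using residual by (simp add: fun_eq_iff)
    then show "X \<mu> w = expansion (\<lambda>p. b p + top p) \<mu> w"
      using expansion_lincomb[OF finite_b finite_top, of 1 1 \<mu> w] by (simp add: algebra_simps)
  qed
  moreover have "finite {p. b p + top p \<noteq> 0}"
    by (rule finite_subset[of _ "{p. b p \<noteq> 0} \<union> {p. top p \<noteq> 0}"]) (use finite_b finite_top in auto)
  ultimately show ?case by (intro exI[of _ "\<lambda>p. b p + top p"]) simp
qed

lemma expansion_eq_0D:
  assumes "finite {p. b p \<noteq> 0}" and "\<And>\<mu> w. expansion b \<mu> w = 0"
  shows "b = (\<lambda>_. 0)"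
proof (rule ccontr)
  assume "b \<noteq> (\<lambda>_. 0)"
  then have "deg ` {p. b p \<noteq> 0} \<noteq> {}" by (auto simp: fun_eq_iff)
  from Max_in[OF finite_imageI[OF assms(1)] this]
  obtain p where "b p \<noteq> 0" and "deg p = Max (deg ` {p. b p \<noteq> 0})"
    by auto
  then have "expansion b zeroQ (word p) = b p"
    using assms(1) by (intro expansion_at_top_word) auto
  with \<open>b p \<noteq> 0\<close> assms(2) show False by simp
qed

theorem unique_expansion:
  "\<exists>!b. finite {p. b p \<noteq> 0} \<and> monoA (word p0) = expansion b"
proof (rule ex_ex1I)
  show "\<exists>b. finite {p. b p \<noteq> 0} \<and> monoA (word p0) = expansion b"
    by (rule exists_expansion_if_lower_degree[of _ "Suc (deg p0)"]) (auto simp: monoA_def split: if_splits)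
next
  fix b1 b2
  assume "finite {p. b1 p \<noteq> 0} \<and> monoA (word p0) = expansion b1"
    and "finite {p. b2 p \<noteq> 0} \<and> monoA (word p0) = expansion b2"
  then have finite_b1: "finite {p. b1 p \<noteq> 0}" and finite_b2: "finite {p. b2 p \<noteq> 0}"
    and same: "expansion b1 = expansion b2"
    by auto
  have "finite {p. b1 p - b2 p \<noteq> 0}"
    by (rule finite_subset[of _ "{p. b1 p \<noteq> 0} \<union> {p. b2 p \<noteq> 0}"]) (use finite_b1 finite_b2 in auto)
  moreover have "expansion (\<lambda>p. b1 p - b2 p) \<mu> w = 0" for \<mu> w
    using expansion_lincomb[OF finite_b1 finite_b2, of 1 "-1" \<mu> w] same by simp
  ultimately have "(\<lambda>p. b1 p - b2 p) = (\<lambda>_. 0)"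
    by (rule expansion_eq_0D)
  then show "b1 = b2" by (simp add: fun_eq_iff)
qed

end

lemma replicate_Cons_replicate_inj:
  assumes "i \<noteq> j"
  shows "inj (\<lambda>(r, s). replicate r i @ j # replicate s i)"
proof (rule injI, clarsimp)
  fix r s r' s'
  assume eq: "replicate r i @ j # replicate s i = replicate r' i @ j # replicate s' i"
  have prefix: "takeWhile (\<lambda>x. x \<noteq> j) (replicate r i @ j # replicate s i) = replicate r i" for r s
    using assms by (subst takeWhile_append2) auto
  have "r = r'" using prefix[of r s] prefix[of r' s'] eq by simp
  moreover from this eq have "s = s'" by simp
  ultimately show "r = r' \<and> s = s'" ..
qed

lemma set_insert_at: "set (take p w @ x # drop p w) = insert x (set w)"
proof -
  have "set w = set (take p w) \<union> set (drop p w)"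
    by (metis append_take_drop_id set_append)
  then show ?thesis by auto
qed

lemma count_list_insert_at:
  "count_list (take p w @ x # drop p w) y = count_list w y + (if x = y then 1 else 0)"
proof -
  have "count_list w y = count_list (take p w @ drop p w) y" by simp
  then show ?thesis by (simp only: count_list_append count_list.simps) simp
qed

definition two_letter_words :: "'i \<Rightarrow> 'i \<Rightarrow> nat \<Rightarrow> 'i list set" where
  "two_letter_words i j n = {w. set w \<subseteq> {i, j} \<and> count_list w j = n}"

lemma Nil_two_letter_words: "[] \<in> two_letter_words i j 0"
  by (simp add: two_letter_words_def)

lemma Cons_two_letter_words:
  "i \<noteq> j \<Longrightarrow> u \<in> two_letter_words i j n \<Longrightarrow> i # u \<in> two_letter_words i j n"
  "u \<in> two_letter_words i j n \<Longrightarrow> j # u \<in> two_letter_words i j (Suc n)"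
  by (auto simp: two_letter_words_def)

lemma insert_at_two_letter_words:
  assumes "i \<noteq> j" and "take p w @ i # drop p w \<in> two_letter_words i j n"
  shows "w \<in> two_letter_words i j n"
  using assms unfolding two_letter_words_def mem_Collect_eq set_insert_at count_list_insert_at
  by simp

lemma two_letter_words_0_subset: "w \<in> two_letter_words i j 0 \<Longrightarrow> set w \<subseteq> {i}"
  by (auto simp: two_letter_words_def count_list_0_iff)

lemma two_letter_words_1_cases:
  assumes "w \<in> two_letter_words i j 1"
  obtains r s where "w = replicate r i @ j # replicate s i"
proof -
  obtain u v where w: "w = u @ j # v" and "j \<notin> set u" and "count_list v j = 0"
    using count_list_Suc_split_first[of w j 0] assms by (auto simp: two_letter_words_def)
  then have "set u \<subseteq> {i}" and "set v \<subseteq> {i}"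
    using assms by (auto simp: two_letter_words_def count_list_0_iff)
  then have "replicate (length u) i = u" and "replicate (length v) i = v"
    by (auto simp: replicate_length_same subset_iff)
  with w show thesis by (intro that[of "length u" "length v"]) simp
qed

lemma Tcar_if_bounded_support:
  fixes X :: "('i::finite,'k::zero) elA"
  assumes "\<And>\<mu> w. X \<mu> w \<noteq> 0 \<Longrightarrow> \<mu> = zeroQ \<and> length w \<le> N"
  shows "X \<in> Tcar"
proof -
  have "{(\<mu>, w). X \<mu> w \<noteq> 0} \<subseteq> {zeroQ} \<times> {w. length w \<le> N}"
    using assms by auto
  moreover have "finite {w :: 'i list. length w \<le> N}"
    using finite_lists_length_le[OF finite_UNIV, of N] by simp
  then have "finite ({zeroQ} \<times> {w :: 'i list. length w \<le> N})"
    by (rule finite_cartesian_product[OF finite.insertI[OF finite.emptyI]])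
  ultimately have "finite {(\<mu>, w). X \<mu> w \<noteq> 0}" by (rule finite_subset)
  with assms show ?thesis unfolding Tcar_def by blast
qed

lemma Fel_Tcar: "(Fel k :: ('i::finite,'k::{zero,one}) elA) \<in> Tcar"
  by (rule Tcar_if_bounded_support[of _ 1]) (auto simp: Fel_def monoA_def split: if_splits)

lemma Tcar_subset_Acar: "Tcar \<subseteq> Acar \<tau>"
proof -
  have "zeroQ \<in> Gtheta \<tau>"
    unfolding Gtheta_def zeroQ_def by (intro CollectI exI[of _ "\<lambda>_. 0"]) simp
  then show ?thesis unfolding Tcar_def Acar_def by auto
qed

lemma oneA_Hcar: "(oneA :: ('i::finite,'k::{zero,one}) elA) \<in> Hcar \<tau>"
proof -
  have "(oneA :: ('i,'k) elA) \<in> Tcar"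
    by (rule Tcar_if_bounded_support[of _ 0]) (auto simp: oneA_def split: if_splits)
  then show ?thesis
    using Tcar_subset_Acar unfolding Hcar_def by (auto simp: oneA_def split: if_splits)
qed

lemma HTmult_oneA:
  fixes Y :: "('i,'k::semiring_1) elA"
  assumes "Y \<in> Tcar"
  shows "HTmult oneA Y = Y"
proof (intro ext)
  fix \<nu> w
  show "HTmult oneA Y \<nu> w = Y \<nu> w"
    using assms unfolding HTmult_def oneA_def Tcar_def by (cases "\<nu> = zeroQ") auto
qed

definition leading_word :: "'i list set \<Rightarrow> 'i list \<Rightarrow> ('i,'k::{zero,one}) elA \<Rightarrow> bool" where
  "leading_word W w0 X \<longleftrightarrow>
     (\<forall>\<mu> w. X \<mu> w \<noteq> 0 \<longrightarrow> \<mu> = zeroQ \<and> w \<in> W \<and> (length w < length w0 \<or> w = w0))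
     \<and> X zeroQ w0 = 1"

lemma leading_word_Tcar:
  fixes X :: "('i::finite,'k::{zero,one}) elA"
  shows "leading_word W w0 X \<Longrightarrow> X \<in> Tcar"
  unfolding leading_word_def
  by (rule Tcar_if_bounded_support[of _ "length w0"]) (metis less_or_eq_imp_le)

lemma leading_word_oneA: "[] \<in> W \<Longrightarrow> leading_word W [] oneA"
  by (auto simp: leading_word_def oneA_def)

lemma Fmul_nonzero: "Fmul k g w \<noteq> 0 \<Longrightarrow> \<exists>u. w = k # u \<and> g u \<noteq> 0"
  by (cases w) (auto simp: Fmul_def split: if_splits)

lemma dL_nonzero:
  "dL a d q k g w \<noteq> 0 \<Longrightarrow> \<exists>p \<le> length w. g (take p w @ k # drop p w) \<noteq> 0"
proof -
  assume "dL a d q k g w \<noteq> 0"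
  then obtain p where "p \<in> {0..length w}"
    and "q powi bform a d (sroot k) (wt (take p w)) * g (take p w @ k # drop p w) \<noteq> 0"
    unfolding dL_def by (rule sum.not_neutral_contains_not_neutral)
  then show ?thesis by auto
qed

locale star_product =
  fixes a :: "'i::finite \<Rightarrow> 'i \<Rightarrow> int" and d :: "'i \<Rightarrow> nat" and q :: "'k::field"
    and \<tau> :: "'i \<Rightarrow> 'i" and c :: "'i \<Rightarrow> 'k"
    and st :: "('i,'k) elA \<Rightarrow> ('i,'k) elA \<Rightarrow> ('i,'k) elA"
  assumes star: "is_star_product a d q \<tau> c st"
begin

lemma star_Acar: "X \<in> Acar \<tau> \<Longrightarrow> Y \<in> Acar \<tau> \<Longrightarrow> st X Y \<in> Acar \<tau>"
  using star unfolding is_star_product_def by blast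

lemma star_assoc:
  "X \<in> Acar \<tau> \<Longrightarrow> Y \<in> Acar \<tau> \<Longrightarrow> Z \<in> Acar \<tau> \<Longrightarrow> st (st X Y) Z = st X (st Y Z)"
  using star unfolding is_star_product_def by blast

lemma oneA_star: "g \<in> Tcar \<Longrightarrow> st oneA g = g"
  using star oneA_Hcar HTmult_oneA unfolding is_star_product_def by metis

lemma Fel_star: "g \<in> Tcar \<Longrightarrow> st (Fel k) g = Fstar_rhs a d q \<tau> c k g"
  using star unfolding is_star_product_def by blast

lemma starpow_Acar: "starpow st (Fel k) r \<in> Acar \<tau>"
proof (induction r)
  case 0
  show ?case using oneA_Hcar[of \<tau>, where 'k = 'k] unfolding Hcar_def by simp
next
  case (Suc r)
  have "Fel k \<in> Acar \<tau>" using Fel_Tcar Tcar_subset_Acar by blast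
  with Suc show ?case by (auto intro: star_Acar)
qed

definition Fstar_coeff :: "'i \<Rightarrow> 'k" where
  "Fstar_coeff k = c k * q powi bform a d (sroot k) (sroot (\<tau> k)) / (q ^ d k - inverse (q ^ d k))"

lemma Fel_star_fixed:
  assumes "\<tau> k = k" and "g \<in> Tcar"
  shows "st (Fel k) g = (\<lambda>\<nu> w. if \<nu> = zeroQ
      then Fmul k (g zeroQ) w - Fstar_coeff k * dL a d q k (g zeroQ) w else 0)"
proof -
  have "(\<lambda>l. sroot (\<tau> k) l - sroot k l) = zeroQ"
    using assms(1) by (simp add: zeroQ_def)
  then show ?thesis
    using assms unfolding Fel_star[OF assms(2)] Fstar_rhs_def Fstar_coeff_def by (auto intro!: ext)
qed

lemma Fel_star_free:
  assumes "g \<in> Tcar" and "\<And>w. g zeroQ w \<noteq> 0 \<Longrightarrow> \<tau> k \<notin> set w"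
  shows "st (Fel k) g = (\<lambda>\<nu> w. if \<nu> = zeroQ then Fmul k (g zeroQ) w else 0)"
proof -
  have "dL a d q (\<tau> k) (g zeroQ) w = 0" for w
    unfolding dL_def using assms(2) by (intro sum.neutral) fastforce
  then show ?thesis
    unfolding Fel_star[OF assms(1)] Fstar_rhs_def by (auto intro!: ext)
qed

lemma Fel_star_fixed_support:
  assumes "\<tau> k = k" and "g \<in> Tcar" and "st (Fel k) g \<mu> w \<noteq> 0"
  shows "\<mu> = zeroQ \<and> ((\<exists>u. w = k # u \<and> g zeroQ u \<noteq> 0)
           \<or> (\<exists>p \<le> length w. g zeroQ (take p w @ k # drop p w) \<noteq> 0))"
proof -
  have "\<mu> = zeroQ" and "Fmul k (g zeroQ) w \<noteq> 0 \<or> dL a d q k (g zeroQ) w \<noteq> 0"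
    using assms(3) unfolding Fel_star_fixed[OF assms(1,2)] by (auto split: if_splits)
  then show ?thesis
    using Fmul_nonzero[of k "g zeroQ" w] dL_nonzero[of a d q k "g zeroQ" w] by blast
qed

lemma leading_word_Fel_star_fixed:
  assumes "\<tau> k = k" and lead: "leading_word W w0 X"
    and cons_closed: "\<And>u. u \<in> W \<Longrightarrow> k # u \<in> W"
    and delete_closed: "\<And>w p. take p w @ k # drop p w \<in> W \<Longrightarrow> w \<in> W"
  shows "leading_word W (k # w0) (st (Fel k) X)"
proof -
  have X: "X \<in> Tcar" using leading_word_Tcar[OF lead] .
  have supp: "\<mu> = zeroQ \<and> w \<in> W \<and> (length w < length w0 \<or> w = w0)" if "X \<mu> w \<noteq> 0" for \<mu> w
    using lead that unfolding leading_word_def by blast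
  have "\<mu> = zeroQ \<and> w \<in> W \<and> (length w < length (k # w0) \<or> w = k # w0)"
    if "st (Fel k) X \<mu> w \<noteq> 0" for \<mu> w
    using Fel_star_fixed_support[OF assms(1) X that]
  proof (elim conjE disjE exE)
    fix u assume "\<mu> = zeroQ" and "w = k # u" and "X zeroQ u \<noteq> 0"
    then show ?thesis using supp[OF \<open>X zeroQ u \<noteq> 0\<close>] cons_closed[of u] by auto
  next
    fix p assume "\<mu> = zeroQ" and "p \<le> length w" and "X zeroQ (take p w @ k # drop p w) \<noteq> 0"
    with supp[OF this(3)] delete_closed[of p w] show ?thesis by auto
  qed
  moreover have "dL a d q k (X zeroQ) (k # w0) = 0"
  proof (rule ccontr)
    assume "dL a d q k (X zeroQ) (k # w0) \<noteq> 0"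
    then obtain p where "p \<le> length (k # w0)"
      and "X zeroQ (take p (k # w0) @ k # drop p (k # w0)) \<noteq> 0"
      using dL_nonzero by blast
    from this(1) supp[OF this(2)] show False
      by (auto dest: arg_cong[of _ _ length])
  qed
  then have "st (Fel k) X zeroQ (k # w0) = 1"
    using lead unfolding Fel_star_fixed[OF assms(1) X] leading_word_def by (simp add: Fmul_def)
  ultimately show ?thesis unfolding leading_word_def by blast
qed

lemma leading_word_Fel_star_free:
  assumes lead: "leading_word W w0 X" and "\<And>w. w \<in> W \<Longrightarrow> \<tau> k \<notin> set w"
    and "\<And>u. u \<in> W \<Longrightarrow> k # u \<in> W'"
  shows "leading_word W' (k # w0) (st (Fel k) X)"
proof -
  have X: "X \<in> Tcar" using leading_word_Tcar[OF lead] .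
  have "st (Fel k) X = (\<lambda>\<nu> w. if \<nu> = zeroQ then Fmul k (X zeroQ) w else 0)"
    using lead assms(2) by (intro Fel_star_free[OF X]) (auto simp: leading_word_def)
  with lead assms(3) show ?thesis
    unfolding leading_word_def by (auto simp: Fmul_def split: list.splits if_splits)
qed

lemma leading_word_starpow:
  assumes "\<tau> k = k" and "[] \<in> W"
    and "\<And>u. u \<in> W \<Longrightarrow> k # u \<in> W"
    and "\<And>w p. take p w @ k # drop p w \<in> W \<Longrightarrow> w \<in> W"
  shows "leading_word W (replicate r k) (starpow st (Fel k) r)"
proof (induction r)
  case 0
  show ?case using leading_word_oneA[OF assms(2)] by simp
next
  case (Suc r)
  show ?case using leading_word_Fel_star_fixed[OF assms(1) Suc assms(3,4)] by simp
qed

lemma leading_word_starpow_star: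
  assumes "\<tau> k = k" and lead: "leading_word W w0 X"
    and "\<And>u. u \<in> W \<Longrightarrow> k # u \<in> W"
    and "\<And>w p. take p w @ k # drop p w \<in> W \<Longrightarrow> w \<in> W"
  shows "leading_word W (replicate r k @ w0) (st (starpow st (Fel k) r) X)"
proof (induction r)
  case 0
  show ?case using lead oneA_star[OF leading_word_Tcar[OF lead]] by simp
next
  case (Suc r)
  have "X \<in> Acar \<tau>" and "Fel k \<in> Acar \<tau>"
    using leading_word_Tcar[OF lead] Fel_Tcar Tcar_subset_Acar by blast+
  then have "st (starpow st (Fel k) (Suc r)) X = st (Fel k) (st (starpow st (Fel k) r) X)"
    using star_assoc[OF _ starpow_Acar] by simp
  then show ?case using leading_word_Fel_star_fixed[OF assms(1) Suc assms(3,4)] by simp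
qed

lemma leading_word_Fel_power_product:
  assumes "\<tau> i = i" and "\<tau> j \<noteq> i" and "i \<noteq> j"
  shows "leading_word (two_letter_words i j 1) (replicate r i @ j # replicate s i)
    (st (st (starpow st (Fel i) r) (Fel j)) (starpow st (Fel i) s))"
proof -
  note i_closed = Cons_two_letter_words(1)[OF assms(3)] insert_at_two_letter_words[OF assms(3)]
  have "leading_word (two_letter_words i j 0) (replicate s i) (starpow st (Fel i) s)"
    using leading_word_starpow[OF assms(1) Nil_two_letter_words i_closed] .
  then have "leading_word (two_letter_words i j 1) (j # replicate s i) (st (Fel j) (starpow st (Fel i) s))"
    by (rule leading_word_Fel_star_free)
      (use assms(2) two_letter_words_0_subset Cons_two_letter_words(2) in fastforce)+
  then have "leading_word (two_letter_words i j 1) (replicate r i @ j # replicate s i)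
      (st (starpow st (Fel i) r) (st (Fel j) (starpow st (Fel i) s)))"
    by (rule leading_word_starpow_star[OF assms(1) _ i_closed])
  moreover have "Fel j \<in> Acar \<tau>" using Fel_Tcar Tcar_subset_Acar by blast
  then have "st (st (starpow st (Fel i) r) (Fel j)) (starpow st (Fel i) s)
      = st (starpow st (Fel i) r) (st (Fel j) (starpow st (Fel i) s))"
    by (rule star_assoc[OF starpow_Acar _ starpow_Acar])
  ultimately show ?thesis by simp
qed

lemma Fel_power_products_unitriangular:
  assumes "\<tau> i = i" and "\<tau> j \<noteq> i" and "i \<noteq> j"
  shows "unitriangular
    (\<lambda>(r, s). st (st (starpow st (Fel i) r) (Fel j)) (starpow st (Fel i) s))
    (\<lambda>(r, s). replicate r i @ j # replicate s i) (\<lambda>(r, s). r + s)"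
proof
  show "inj (\<lambda>(r, s). replicate r i @ j # replicate s i)"
    using assms(3) by (rule replicate_Cons_replicate_inj)
  show "finite {p. (case p of (r, s) \<Rightarrow> r + s) = N}" for N :: nat
    by (rule finite_subset[of _ "{..N} \<times> {..N}"]) auto
  show "(case p of (r, s) \<Rightarrow> st (st (starpow st (Fel i) r) (Fel j)) (starpow st (Fel i) s)) zeroQ
      (case p of (r, s) \<Rightarrow> replicate r i @ j # replicate s i) = 1" for p
    using leading_word_Fel_power_product[OF assms] unfolding leading_word_def by (cases p) simp
next
  fix p \<mu> w
  assume nonzero: "(case p of (r, s) \<Rightarrow> st (st (starpow st (Fel i) r) (Fel j)) (starpow st (Fel i) s)) \<mu> w \<noteq> 0"
  obtain r s where p: "p = (r, s)" by fastforce
  with nonzero leading_word_Fel_power_product[OF assms, of r s] have "\<mu> = zeroQ" and "w \<in> two_letter_words i j 1"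
    and lower: "length w < length (replicate r i @ j # replicate s i) \<or> w = replicate r i @ j # replicate s i"
    unfolding leading_word_def by auto
  from this(2) obtain r' s' where w: "w = replicate r' i @ j # replicate s' i"
    by (rule two_letter_words_1_cases)
  have "r' + s' < r + s \<or> (r', s') = (r, s)"
    using lower
  proof
    assume "w = replicate r i @ j # replicate s i"
    then show ?thesis
      using w injD[OF replicate_Cons_replicate_inj[OF assms(3)], of "(r', s')" "(r, s)"] by simp
  qed (simp add: w)
  with \<open>\<mu> = zeroQ\<close> w p show "\<mu> = zeroQ \<and> (\<exists>p'. w = (case p' of (r, s) \<Rightarrow> replicate r i @ j # replicate s i)
      \<and> ((case p' of (r, s) \<Rightarrow> r + s) < (case p of (r, s) \<Rightarrow> r + s) \<or> p' = p))"
    by (intro conjI exI[of _ "(r', s')"]) auto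
qed

end

theorem lemma4p7:
  fixes a :: "'i::finite \<Rightarrow> 'i \<Rightarrow> int" and d :: "'i \<Rightarrow> nat"
    and q :: "'k::field_char_0" and \<tau> :: "'i \<Rightarrow> 'i" and c :: "'i \<Rightarrow> 'k"
    and st :: "('i,'k) elA \<Rightarrow> ('i,'k) elA \<Rightarrow> ('i,'k) elA"
    and i j :: 'i and m n :: nat
  assumes "gen_cartan a" and "symmetrizer a d"
    and "q \<noteq> 0" and "\<forall>k. q ^ (2 * d k) \<noteq> 1"
    and "\<forall>k. \<tau> (\<tau> k) = k" and "\<forall>k l. a (\<tau> k) (\<tau> l) = a k l"
    and "\<forall>k. c k \<noteq> 0" and "\<forall>k. a k (\<tau> k) = 0 \<longrightarrow> c k = c (\<tau> k)"
    and "is_star_product a d q \<tau> c st"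
    and "\<tau> i = i" and "i \<noteq> j"
  shows "\<exists>!b :: nat \<times> nat \<Rightarrow> 'k. finite {p. b p \<noteq> 0} \<and>
           monoA (replicate m i @ j # replicate n i)
             = (\<lambda>\<mu> w. \<Sum>(r,s)\<in>{p. b p \<noteq> 0}.
                  b (r,s) * st (st (starpow st (Fel i) r) (Fel j)) (starpow st (Fel i) s) \<mu> w)"
proof -
  interpret star_product a d q \<tau> c st
    using assms(9) by unfold_locales
  have "\<tau> j \<noteq> i"
    using assms(5,10,11) by metis
  then interpret unitriangular
    "\<lambda>(r, s). st (st (starpow st (Fel i) r) (Fel j)) (starpow st (Fel i) s)"
    "\<lambda>(r, s). replicate r i @ j # replicate s i" "\<lambda>(r, s). r + s"
    using Fel_power_products_unitriangular assms(10,11) by blast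
  show ?thesis
    using unique_expansion[of "(m, n)"] unfolding expansion_def by (simp add: split_def)
qed

end
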